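(* Let $G$ be a finite group. If $(S,T,U)$ is a TPP triple of $G$ consisting of subgroups $S,T,U$ of $G$, at least one of which is normal in $G$, then $|S|\cdot|T|\cdot|U|\le |G|$.
   Context: For a nonempty subset $X$ of a group $G$, $Q(X):=\{xy^{-1}: x,y\in X\}$ (so $Q(X)=X$ for a subgroup $X$). Nonempty subsets $S,T,U$ of $G$ form a TPP triple if for all $s\in Q(S)$, $t\in Q(T)$, $u\in Q(U)$: $stu=1$ iff $s=t=u=1$. *)

theory Defs
  imports "HOL-Algebra.Algebra"
begin

definition quot_set :: "('a, 'b) monoid_scheme \<Rightarrow> 'a set \<Rightarrow> 'a set" where
  "quot_set H A = {x \<otimes>\<^bsub>H\<^esub> inv\<^bsub>H\<^esub> y | x y. x \<in> A \<and> y \<in> A}"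

definition TPP_triple :: "('a, 'b) monoid_scheme \<Rightarrow> 'a set \<Rightarrow> 'a set \<Rightarrow> 'a set \<Rightarrow> bool" where
  "TPP_triple H A B C \<longleftrightarrow>
     A \<subseteq> carrier H \<and> B \<subseteq> carrier H \<and> C \<subseteq> carrier H \<and>
     A \<noteq> {} \<and> B \<noteq> {} \<and> C \<noteq> {} \<and>
     (\<forall>s \<in> quot_set H A. \<forall>t \<in> quot_set H B. \<forall>u \<in> quot_set H C.
        (s \<otimes>\<^bsub>H\<^esub> t \<otimes>\<^bsub>H\<^esub> u = \<one>\<^bsub>H\<^esub>) \<longleftrightarrow>
        (s = \<one>\<^bsub>H\<^esub> \<and> t = \<one>\<^bsub>H\<^esub> \<and> u = \<one>\<^bsub>H\<^esub>))"

end

theory Submission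
  imports Defs
begin

text \<open>For subgroups the quotient sets are the subgroups themselves, so the TPP condition says
  that \<open>s t u = 1\<close> forces \<open>s = t = u = 1\<close> for \<open>s \<in> S, t \<in> T, u \<in> U\<close>. This condition is
  invariant under cyclic rotation of the triple (conjugate \<open>s t u\<close> by \<open>s\<close>), so the normal
  subgroup may be taken last. If \<open>N\<close> is normal and \<open>a b n = a' b' n'\<close>, then
  \<open>(a'\<inverse> a) (b b'\<inverse>) (b' n n'\<inverse> b'\<inverse>) = 1\<close> with the third factor in \<open>N\<close>; hence the product map
  \<open>A \<times> B \<times> N \<rightarrow> G\<close> is injective and \<open>|A| |B| |N| \<le> |G|\<close>.\<close>

definition trivial_triple_product :: "('a, 'b) monoid_scheme \<Rightarrow> 'a set \<Rightarrow> 'a set \<Rightarrow> 'a set \<Rightarrow> bool" where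
  "trivial_triple_product G A B C \<longleftrightarrow>
     (\<forall>a \<in> A. \<forall>b \<in> B. \<forall>c \<in> C. a \<otimes>\<^bsub>G\<^esub> b \<otimes>\<^bsub>G\<^esub> c = \<one>\<^bsub>G\<^esub> \<longrightarrow>
        a = \<one>\<^bsub>G\<^esub> \<and> b = \<one>\<^bsub>G\<^esub> \<and> c = \<one>\<^bsub>G\<^esub>)"

lemma (in group) inv_mult_cancel_left:
  "x \<in> carrier G \<Longrightarrow> y \<in> carrier G \<Longrightarrow> inv x \<otimes> (x \<otimes> y) = y"
  by (simp add: m_assoc[symmetric])

lemma (in group) quot_set_subgroup:
  assumes "subgroup H G"
  shows "quot_set G H = H"
proof
  show "quot_set G H \<subseteq> H"
    using assms by (auto simp: quot_set_def subgroup.m_closed subgroup.m_inv_closed)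
  show "H \<subseteq> quot_set G H"
  proof
    fix x assume "x \<in> H"
    then have "x = x \<otimes> inv \<one>" and "\<one> \<in> H"
      using assms subgroup.subset subgroup.one_closed by fastforce+
    with \<open>x \<in> H\<close> show "x \<in> quot_set G H"
      unfolding quot_set_def by blast
  qed
qed

lemma (in group) TPP_triple_subgroups_imp_trivial_triple_product:
  assumes "subgroup S G" "subgroup T G" "subgroup U G" "TPP_triple G S T U"
  shows "trivial_triple_product G S T U"
  using assms by (simp add: TPP_triple_def trivial_triple_product_def quot_set_subgroup)

lemma (in group) prod_eq_one_rotate:
  assumes "a \<in> carrier G" "b \<in> carrier G" "c \<in> carrier G" "a \<otimes> b \<otimes> c = \<one>"
  shows "b \<otimes> c \<otimes> a = \<one>"
proof -
  have "b \<otimes> c \<otimes> a = inv a \<otimes> (a \<otimes> b \<otimes> c) \<otimes> a"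
    using assms(1-3) by (simp add: m_assoc[symmetric])
  with assms show ?thesis by simp
qed

lemma (in group) trivial_triple_product_rotate:
  assumes "A \<subseteq> carrier G" "B \<subseteq> carrier G" "C \<subseteq> carrier G"
    and "trivial_triple_product G A B C"
  shows "trivial_triple_product G B C A"
  using assms prod_eq_one_rotate unfolding trivial_triple_product_def by (meson subsetD)

lemma (in group) triple_product_inj_on:
  assumes A: "subgroup A G" and B: "subgroup B G" and N: "N \<lhd> G"
    and triv: "trivial_triple_product G A B N"
  shows "inj_on (\<lambda>(a, b, n). a \<otimes> b \<otimes> n) (A \<times> B \<times> N)"
proof (rule inj_onI, clarsimp)
  fix a b n a' b' n'
  assume mem: "a \<in> A" "b \<in> B" "n \<in> N" "a' \<in> A" "b' \<in> B" "n' \<in> N"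
    and eq: "a \<otimes> b \<otimes> n = a' \<otimes> b' \<otimes> n'"
  have NG: "subgroup N G" using N normal_imp_subgroup by blast
  have car: "a \<in> carrier G" "b \<in> carrier G" "n \<in> carrier G"
    "a' \<in> carrier G" "b' \<in> carrier G" "n' \<in> carrier G"
    using mem A B NG subgroup.subset by blast+
  define m where "m = b' \<otimes> (n \<otimes> inv n') \<otimes> inv b'"
  have "m \<in> N"
    unfolding m_def using mem NG car
    by (simp add: normal.inv_op_closed2[OF N] subgroup.m_closed subgroup.m_inv_closed)
  moreover have "inv a' \<otimes> a \<in> A" "b \<otimes> inv b' \<in> B"
    using mem A B by (simp_all add: subgroup.m_closed subgroup.m_inv_closed)
  moreover have "inv a' \<otimes> a \<otimes> (b \<otimes> inv b') \<otimes> m = inv a' \<otimes> (a \<otimes> b \<otimes> n) \<otimes> inv n' \<otimes> inv b'"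
    unfolding m_def using car by (simp add: m_assoc inv_mult_cancel_left)
  then have "inv a' \<otimes> a \<otimes> (b \<otimes> inv b') \<otimes> m = \<one>"
    using car by (simp add: eq m_assoc)
  ultimately have "inv a' \<otimes> a = \<one>" "b \<otimes> inv b' = \<one>"
    using triv unfolding trivial_triple_product_def by blast+
  then have "a = a'" "b = b'"
    using car by (simp_all add: inv_solve_left' inv_solve_right')
  moreover from this eq have "n = n'"
    using car by simp
  ultimately show "a = a' \<and> b = b' \<and> n = n'"
    by blast
qed

lemma (in group) card_triple_product_le_order:
  assumes "finite (carrier G)"
    and "subgroup A G" "subgroup B G" "N \<lhd> G" "trivial_triple_product G A B N"
  shows "card A * card B * card N \<le> order G"
proof -
  have img: "(\<lambda>(a, b, n). a \<otimes> b \<otimes> n) ` (A \<times> B \<times> N) \<subseteq> carrier G"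
    using assms(2-4) normal_imp_subgroup subgroup.subset by fastforce
  have "card (A \<times> B \<times> N) \<le> card (carrier G)"
    using card_inj_on_le[OF triple_product_inj_on[OF assms(2-5)] img assms(1)] .
  then show ?thesis
    by (simp add: card_cartesian_product order_def mult.assoc)
qed

theorem mainTheorem3:
  fixes G (structure) and S T U :: "'a set"
  assumes "group G" and "finite (carrier G)"
    and "subgroup S G" and "subgroup T G" and "subgroup U G"
    and "TPP_triple G S T U"
    and "S \<lhd> G \<or> T \<lhd> G \<or> U \<lhd> G"
  shows "card S * card T * card U \<le> order G"
proof -
  interpret group G by fact
  have sub: "S \<subseteq> carrier G" "T \<subseteq> carrier G" "U \<subseteq> carrier G"
    using assms(3-5) subgroup.subset by blast+
  have STU: "trivial_triple_product G S T U"
    using assms(3-6) by (rule TPP_triple_subgroups_imp_trivial_triple_product)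
  have TUS: "trivial_triple_product G T U S"
    using sub STU by (rule trivial_triple_product_rotate)
  have UST: "trivial_triple_product G U S T"
    using sub(2,3,1) TUS by (rule trivial_triple_product_rotate)
  from assms(7) show ?thesis
  proof (elim disjE)
    assume "S \<lhd> G"
    with TUS have "card T * card U * card S \<le> order G"
      using assms(2,4,5) card_triple_product_le_order by blast
    then show ?thesis by (simp add: mult_ac)
  next
    assume "T \<lhd> G"
    with UST have "card U * card S * card T \<le> order G"
      using assms(2,3,5) card_triple_product_le_order by blast
    then show ?thesis by (simp add: mult_ac)
  next
    assume "U \<lhd> G"
    with STU show ?thesis
      using assms(2-4) card_triple_product_le_order by blast
  qed
qed

end
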